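(* Let $(R_\theta,p_\theta)_{\theta\in\Theta}$ be an incentive compatible menu with $\int_\Theta V_\theta(R_\theta,p_\theta)\,d\mu\ge0$. Then $(R_\theta,p_\theta)_{\theta\in\Theta}$ is individually rational if and only if $U_{\underline\theta}(R_{\underline\theta},p_{\underline\theta})\ge U_{\underline\theta}(L_{\underline\theta},0)$.
   Context: Setting (Yaari dual-utility insurance model). $(S,\Sigma,\mathbb P)$ is a probability space. Types: $\Theta=[\underline\theta,\bar\theta]$ with Borel $\sigma$-algebra and a probability measure $\mu$ with a Lebesgue density $q$. Fix $\bar L<\infty$. For each $\theta$ the type-$\theta$ agent faces a loss $L_\theta$ (bounded, $\Sigma$-measurable, values in $[0,\bar L]$) with continuous distribution function $F_\theta(l)=\mathbb P(L_\theta\le l)$. Retention functions: $\mathcal R=\{R:[0,\bar L]\to[0,\bar L]: R(0)=0,\ 0\le\partial R(l)/\partial l\le1\}$. A menu is a family $(R_\theta,p_\theta)_{\theta\in\Theta}$ with $R_\theta\in\mathcal R$, $p_\theta\in\mathbb R$. A distortion function is a nondecreasing $g:[0,1]\to[0,1]$ with $g(0)=0,g(1)=1$; type $\theta$ has distortion $g_\theta$ (with $g'_\theta$ the derivative in $t$), the insurer $g^{In}$. Utilities: $U_\theta(R,p)=-p-\int_0^{\bar L}[1-g_\theta(F_\theta(l))]\frac{\partial R(l)}{\partial l}dl$, $V_\theta(R,p)=p-\int_0^{\bar L}[1-g^{In}(F_\theta(l))](1-\frac{\partial R(l)}{\partial l})dl$, no-insurance utility $U_\theta(L_\theta,0)=-\int_0^{\bar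 L}[1-g_\theta(F_\theta(l))]dl$. Throughout, for every menu the maps $\theta\mapsto U_\theta(R_\theta,p_\theta)$, $\theta\mapsto V_\theta(R_\theta,p_\theta)$ lie in $L^1(\Theta,\mu)$. Individually rational: (P1) $U_\theta(R_\theta,p_\theta)\ge U_\theta(L_\theta,0)$ for all $\theta$ and (P2) $\int_\Theta V_\theta(R_\theta,p_\theta)d\mu\ge0$. Incentive compatible: $U_\theta(R_\theta,p_\theta)\ge U_\theta(R_{\theta'},p_{\theta'})$ for all $\theta,\theta'$. Standing assumptions: (A1) $g^{In}(t)\ge g_\theta(t)$ for all $t,\theta$. (A2) $\theta\mapsto F_\theta(l)$ differentiable, $\{F_\theta\}$ uniformly Lipschitz in $\theta$, $\partial F_\theta(l)/\partial\theta\le0$ for all $l$. (A3) each $g_\theta$ differentiable with $g'_\theta\le\delta$ for a common $\delta<\infty$; $\theta\mapsto g_\theta(t)$ differentiable, uniformly Lipschitz in $\theta$; $\partial g_\theta(t)/\partial\theta\le0$ for $t\in(0,1)$. *)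

theory Defs
  imports "HOL-Analysis.Analysis" "HOL-Probability.Probability"
begin

definition distF :: "'s measure \<Rightarrow> (real \<Rightarrow> 's \<Rightarrow> real) \<Rightarrow> real \<Rightarrow> real \<Rightarrow> real" where
  "distF P L th l = measure P {s \<in> space P. L th s \<le> l}"

definition dRet :: "real \<Rightarrow> (real \<Rightarrow> real) \<Rightarrow> real \<Rightarrow> real" where
  "dRet Lbar R l = vector_derivative R (at l within {0..Lbar})"

definition retention :: "real \<Rightarrow> (real \<Rightarrow> real) set" where
  "retention Lbar = {R. R 0 = 0 \<and> (\<forall>l\<in>{0..Lbar}. R l \<in> {0..Lbar}) \<and>
      (\<forall>l\<in>{0..Lbar}. \<exists>D. (R has_real_derivative D) (at l within {0..Lbar}) \<and> 0 \<le> D \<and> D \<le> 1)}"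

definition distortion :: "(real \<Rightarrow> real) \<Rightarrow> bool" where
  "distortion g \<longleftrightarrow> g 0 = 0 \<and> g 1 = 1 \<and> mono_on {0..1} g \<and> (\<forall>t\<in>{0..1}. g t \<in> {0..1})"

definition Uag :: "real \<Rightarrow> (real \<Rightarrow> real \<Rightarrow> real) \<Rightarrow> (real \<Rightarrow> real \<Rightarrow> real) \<Rightarrow> real
    \<Rightarrow> (real \<Rightarrow> real) \<Rightarrow> real \<Rightarrow> real" where
  "Uag Lbar g F th R p = - p - integral {0..Lbar} (\<lambda>l. (1 - g th (F th l)) * dRet Lbar R l)"

text \<open>No-insurance utility U_th(L_th, 0).\<close>
definition Unoins :: "real \<Rightarrow> (real \<Rightarrow> real \<Rightarrow> real) \<Rightarrow> (real \<Rightarrow> real \<Rightarrow> real) \<Rightarrow> real \<Rightarrow> real" where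
  "Unoins Lbar g F th = - integral {0..Lbar} (\<lambda>l. 1 - g th (F th l))"

definition Vins :: "real \<Rightarrow> (real \<Rightarrow> real) \<Rightarrow> (real \<Rightarrow> real \<Rightarrow> real) \<Rightarrow> real
    \<Rightarrow> (real \<Rightarrow> real) \<Rightarrow> real \<Rightarrow> real" where
  "Vins Lbar gIn F th R p = p - integral {0..Lbar} (\<lambda>l. (1 - gIn (F th l)) * (1 - dRet Lbar R l))"

definition incentive_compatible :: "real \<Rightarrow> (real \<Rightarrow> real \<Rightarrow> real) \<Rightarrow> (real \<Rightarrow> real \<Rightarrow> real)
    \<Rightarrow> real set \<Rightarrow> (real \<Rightarrow> real \<Rightarrow> real) \<Rightarrow> (real \<Rightarrow> real) \<Rightarrow> bool" where
  "incentive_compatible Lbar g F Th Rm pm \<longleftrightarrow>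
     (\<forall>th\<in>Th. \<forall>th'\<in>Th. Uag Lbar g F th (Rm th) (pm th) \<ge> Uag Lbar g F th (Rm th') (pm th'))"

definition individually_rational :: "real \<Rightarrow> (real \<Rightarrow> real \<Rightarrow> real) \<Rightarrow> (real \<Rightarrow> real) \<Rightarrow> (real \<Rightarrow> real \<Rightarrow> real)
    \<Rightarrow> real set \<Rightarrow> real measure \<Rightarrow> (real \<Rightarrow> real \<Rightarrow> real) \<Rightarrow> (real \<Rightarrow> real) \<Rightarrow> bool" where
  "individually_rational Lbar g gIn F Th mu Rm pm \<longleftrightarrow>
     (\<forall>th\<in>Th. Uag Lbar g F th (Rm th) (pm th) \<ge> Unoins Lbar g F th) \<and>
     (\<integral>th. Vins Lbar gIn F th (Rm th) (pm th) \<partial>mu) \<ge> 0"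

end

theory Submission
  imports Defs
begin

(* By incentive compatibility every type weakly prefers its own contract to the one of the
  lowest type, so it suffices that every type gains at least as much from the contract (R, p)
  of the lowest type as the lowest type itself does.  The gain of type \<theta> from (R, p) is
  -p + \<integral> (1 - g\<^sub>\<theta>(F\<^sub>\<theta>(l))) (1 - R'(l)) dl, and since 0 \<le> R' \<le> 1 it grows with the distorted
  survival function 1 - g\<^sub>\<theta> \<circ> F\<^sub>\<theta>, which by (A2) and (A3) is pointwise nondecreasing in \<theta>. *)

lemma antimono_if_nonpos_derivative_within:
  fixes f :: "real \<Rightarrow> real"
  assumes der: "\<And>x. x \<in> {a..b} \<Longrightarrow> \<exists>D. (f has_real_derivative D) (at x within {a..b}) \<and> D \<le> 0"
    and x: "x \<in> {a..b}" and y: "y \<in> {a..b}" and "x \<le> y"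
  shows "f y \<le> f x"
proof (rule DERIV_nonpos_imp_decreasing_open[OF \<open>x \<le> y\<close>])
  fix z assume "x < z" "z < y"
  then have z: "z \<in> {a<..<b}" using x y by auto
  then have "at z within {a..b} = at z" by (intro at_within_interior) auto
  then show "\<exists>D. (f has_real_derivative D) (at z) \<and> D \<le> 0" using der[of z] z by auto
next
  have "f differentiable_on {a..b}"
    using der unfolding differentiable_on_def real_differentiable_def by blast
  then show "continuous_on {x..y} f"
    using x y by (auto intro: continuous_on_subset differentiable_imp_continuous_on)
qed

lemma distF_range: "prob_space P \<Longrightarrow> distF P L th l \<in> {0..1}"
  unfolding distF_def by (simp add: prob_space.prob_le_1)

lemma distortion_mono:
  "distortion g \<Longrightarrow> s \<in> {0..1} \<Longrightarrow> t \<in> {0..1} \<Longrightarrow> s \<le> t \<Longrightarrow> g s \<le> g t"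
  unfolding distortion_def by (meson mono_onD)

lemma distortion_family_antimono:
  assumes dist: "\<And>x. x \<in> {a..b} \<Longrightarrow> distortion (g x)"
    and der: "\<And>x t. x \<in> {a..b} \<Longrightarrow> t \<in> {0<..<1} \<Longrightarrow>
      \<exists>D. ((\<lambda>x. g x t) has_real_derivative D) (at x within {a..b}) \<and> D \<le> 0"
    and "x \<in> {a..b}" "y \<in> {a..b}" "x \<le> y" and t: "t \<in> {0..1}"
  shows "g y t \<le> g x t"
proof (cases "t \<in> {0<..<1}")
  case True
  then show ?thesis
    using antimono_if_nonpos_derivative_within[where f = "\<lambda>x. g x t"] der assms by blast
next
  case False
  then have "t = 0 \<or> t = 1" using t by auto
  then show ?thesis using dist \<open>x \<in> {a..b}\<close> \<open>y \<in> {a..b}\<close> unfolding distortion_def by auto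
qed

lemma distorted_cdf_antimono:
  assumes F_range: "\<And>x l. F x l \<in> {0..1}"
    and F_der: "\<And>x l. x \<in> {a..b} \<Longrightarrow>
      \<exists>D. ((\<lambda>x. F x l) has_real_derivative D) (at x within {a..b}) \<and> D \<le> 0"
    and dist: "\<And>x. x \<in> {a..b} \<Longrightarrow> distortion (g x)"
    and g_der: "\<And>x t. x \<in> {a..b} \<Longrightarrow> t \<in> {0<..<1} \<Longrightarrow>
      \<exists>D. ((\<lambda>x. g x t) has_real_derivative D) (at x within {a..b}) \<and> D \<le> 0"
    and x: "x \<in> {a..b}" and y: "y \<in> {a..b}" and "x \<le> y"
  shows "g y (F y l) \<le> g x (F x l)"
proof -
  have "F y l \<le> F x l"
    using antimono_if_nonpos_derivative_within[where f = "\<lambda>x. F x l"] F_der x y \<open>x \<le> y\<close> by blast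
  then have "g y (F y l) \<le> g y (F x l)"
    using distortion_mono[OF dist[OF y]] F_range by blast
  also have "\<dots> \<le> g x (F x l)"
    using distortion_family_antimono[OF dist g_der x y \<open>x \<le> y\<close> F_range] .
  finally show ?thesis .
qed

lemma continuous_on_compose_real_derivative:
  assumes "\<And>t. t \<in> T \<Longrightarrow> \<exists>D. (g has_real_derivative D) (at t within T)"
    and "continuous_on S f" and "f ` S \<subseteq> T"
  shows "continuous_on S (\<lambda>x. g (f x))"
proof (rule continuous_on_compose2[OF _ assms(2,3)])
  have "g differentiable_on T"
    using assms(1) unfolding differentiable_on_def real_differentiable_def by blast
  then show "continuous_on T g" by (rule differentiable_imp_continuous_on)
qed

lemma retention_has_dRet:
  assumes R: "R \<in> retention Lbar" and "0 < Lbar" and l: "l \<in> {0..Lbar}"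
  shows "(R has_vector_derivative dRet Lbar R l) (at l within {0..Lbar})"
    and "dRet Lbar R l \<in> {0..1}"
proof -
  obtain D where D: "(R has_vector_derivative D) (at l within {0..Lbar})" "D \<in> {0..1}"
    using R l unfolding retention_def has_real_derivative_iff_has_vector_derivative by force
  moreover have "dRet Lbar R l = D"
    unfolding dRet_def using vector_derivative_within_closed_interval[OF \<open>0 < Lbar\<close> l D(1)] .
  ultimately show "(R has_vector_derivative dRet Lbar R l) (at l within {0..Lbar})"
    and "dRet Lbar R l \<in> {0..1}" by simp_all
qed

lemma retention_dRet_integrable:
  assumes R: "R \<in> retention Lbar"
  shows "dRet Lbar R integrable_on {0..Lbar}"
proof (cases "0 < Lbar")
  case True
  have "(dRet Lbar R has_integral R Lbar - R 0) {0..Lbar}"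
    using True retention_has_dRet[OF R True] by (intro fundamental_theorem_of_calculus) auto
  then show ?thesis by blast
next
  case False
  then have "negligible {0..Lbar}"
    by (intro negligible_subset[OF negligible_sing[of 0]]) auto
  then show ?thesis by (rule integrable_negligible)
qed

lemma integrable_continuous_mult_nonneg:
  fixes h d :: "real \<Rightarrow> real"
  assumes h: "continuous_on T h" "compact T" and S: "S \<subseteq> T" "S \<in> sets lebesgue"
    and d: "d integrable_on S" "\<And>x. x \<in> S \<Longrightarrow> 0 \<le> d x"
  shows "(\<lambda>x. h x * d x) integrable_on S"
proof -
  have "(\<lambda>x. h x * d x) absolutely_integrable_on S"
  proof (rule absolutely_integrable_bounded_measurable_product_real)
    show "h \<in> borel_measurable (lebesgue_on S)"
      using continuous_imp_measurable_on_sets_lebesgue continuous_on_subset[OF h(1) S(1)] S(2) by blast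
    show "bounded (h ` S)"
      using compact_continuous_image[OF h] S(1) compact_imp_bounded
      by (meson bounded_subset image_mono)
    show "d absolutely_integrable_on S"
      using nonnegative_absolutely_integrable_1 d by blast
  qed (rule S(2))
  then show ?thesis using absolutely_integrable_on_def by blast
qed

(* The bounds on d are assumed only in the interior: on a degenerate interval dRet is a junk value. *)
lemma integral_complement_weighted_mono:
  fixes h1 h2 d :: "real \<Rightarrow> real"
  assumes h: "continuous_on {a..b} h1" "continuous_on {a..b} h2"
    and le: "\<And>x. x \<in> {a..b} \<Longrightarrow> h1 x \<le> h2 x"
    and d: "d integrable_on {a..b}" "\<And>x. x \<in> {a<..<b} \<Longrightarrow> d x \<in> {0..1}"
  shows "integral {a..b} h1 - integral {a..b} (\<lambda>x. h1 x * d x)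
    \<le> integral {a..b} h2 - integral {a..b} (\<lambda>x. h2 x * d x)"
proof -
  let ?S = "{a<..<b}"
  have int: "h integrable_on ?S" "(\<lambda>x. h x * d x) integrable_on ?S"
    if "continuous_on {a..b} h" for h
  proof -
    show "h integrable_on ?S"
      using integrable_continuous_real[OF that] by (simp add: integrable_on_open_interval_real)
    show "(\<lambda>x. h x * d x) integrable_on ?S"
    proof (rule integrable_continuous_mult_nonneg[OF that compact_Icc])
      show "d integrable_on ?S" using d(1) by (simp add: integrable_on_open_interval_real)
    qed (use d(2) in auto)
  qed
  have expand: "(\<lambda>x. (h2 x - h1 x) * (1 - d x))
      = (\<lambda>x. (h2 x - h2 x * d x) - (h1 x - h1 x * d x))"
    by (simp add: algebra_simps)
  have "0 \<le> integral ?S (\<lambda>x. (h2 x - h1 x) * (1 - d x))"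
  proof (rule integral_nonneg)
    show "(\<lambda>x. (h2 x - h1 x) * (1 - d x)) integrable_on ?S"
      unfolding expand using int[OF h(1)] int[OF h(2)] by (intro integrable_diff)
  next
    fix x assume "x \<in> ?S"
    then show "0 \<le> (h2 x - h1 x) * (1 - d x)"
      using le[of x] d(2)[of x] by simp
  qed
  also have "\<dots> = (integral ?S h2 - integral ?S (\<lambda>x. h2 x * d x))
      - (integral ?S h1 - integral ?S (\<lambda>x. h1 x * d x))"
    unfolding expand using int[OF h(1)] int[OF h(2)] by (simp add: integral_diff integrable_diff)
  finally show ?thesis by (simp add: integral_open_interval_real)
qed

lemma insurance_gain_mono:
  assumes R: "R \<in> retention Lbar"
    and cont: "continuous_on {0..Lbar} (\<lambda>l. g th (F th l))"
      "continuous_on {0..Lbar} (\<lambda>l. g th' (F th' l))"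
    and le: "\<And>l. l \<in> {0..Lbar} \<Longrightarrow> g th' (F th' l) \<le> g th (F th l)"
  shows "Uag Lbar g F th R p - Unoins Lbar g F th \<le> Uag Lbar g F th' R p - Unoins Lbar g F th'"
proof -
  have "integral {0..Lbar} (\<lambda>l. 1 - g th (F th l))
      - integral {0..Lbar} (\<lambda>l. (1 - g th (F th l)) * dRet Lbar R l)
    \<le> integral {0..Lbar} (\<lambda>l. 1 - g th' (F th' l))
      - integral {0..Lbar} (\<lambda>l. (1 - g th' (F th' l)) * dRet Lbar R l)"
  proof (rule integral_complement_weighted_mono)
    show "dRet Lbar R integrable_on {0..Lbar}" using R by (rule retention_dRet_integrable)
    show "dRet Lbar R l \<in> {0..1}" if "l \<in> {0<..<Lbar}" for l
      using retention_has_dRet(2)[OF R] that by auto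
  qed (use cont le in \<open>auto intro!: continuous_intros\<close>)
  then show ?thesis unfolding Uag_def Unoins_def by simp
qed

lemma participation_of_lowest_type_suffices:
  assumes IC: "incentive_compatible Lbar g F Th Rm pm"
    and th0: "th0 \<in> Th" and part0: "Uag Lbar g F th0 (Rm th0) (pm th0) \<ge> Unoins Lbar g F th0"
    and gain: "Uag Lbar g F th0 (Rm th0) (pm th0) - Unoins Lbar g F th0
      \<le> Uag Lbar g F th (Rm th0) (pm th0) - Unoins Lbar g F th"
    and th: "th \<in> Th"
  shows "Uag Lbar g F th (Rm th) (pm th) \<ge> Unoins Lbar g F th"
proof -
  have "Uag Lbar g F th (Rm th) (pm th) \<ge> Uag Lbar g F th (Rm th0) (pm th0)"
    using IC th th0 unfolding incentive_compatible_def by blast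
  then show ?thesis using part0 gain by linarith
qed

theorem proposition4:
  fixes P :: "'s measure" and L :: "real \<Rightarrow> 's \<Rightarrow> real"
    and th_lo th_hi Lbar :: real
    and mu :: "real measure" and q :: "real \<Rightarrow> real"
    and g :: "real \<Rightarrow> real \<Rightarrow> real" and gIn :: "real \<Rightarrow> real"
    and Rm :: "real \<Rightarrow> real \<Rightarrow> real" and pm :: "real \<Rightarrow> real"
  defines "F \<equiv> distF P L"
  assumes P: "prob_space P"
    and Th: "th_lo < th_hi"
    and Lbar: "0 \<le> Lbar"
    and mu_def: "mu = density (restrict_space lborel {th_lo..th_hi}) (\<lambda>th. ennreal (q th))"
    and q_meas: "q \<in> borel_measurable lborel" and q_nonneg: "\<And>th. q th \<ge> 0"
    and mu_prob: "prob_space mu"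
    and L_meas: "\<And>th. th \<in> {th_lo..th_hi} \<Longrightarrow> L th \<in> borel_measurable P"
    and L_range: "\<And>th s. th \<in> {th_lo..th_hi} \<Longrightarrow> s \<in> space P \<Longrightarrow> L th s \<in> {0..Lbar}"
    and F_cont: "\<And>th. th \<in> {th_lo..th_hi} \<Longrightarrow> continuous_on UNIV (F th)"
    and g_dist: "\<And>th. th \<in> {th_lo..th_hi} \<Longrightarrow> distortion (g th)"
    and gIn_dist: "distortion gIn"
    \<comment> \<open>(A1)\<close>
    and A1: "\<And>th t. th \<in> {th_lo..th_hi} \<Longrightarrow> t \<in> {0..1} \<Longrightarrow> gIn t \<ge> g th t"
    \<comment> \<open>(A2)\<close>
    and A2_diff: "\<And>th l. th \<in> {th_lo..th_hi} \<Longrightarrow>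
        \<exists>D. ((\<lambda>x. F x l) has_real_derivative D) (at th within {th_lo..th_hi}) \<and> D \<le> 0"
    and A2_lip: "\<exists>K. \<forall>l. \<forall>th\<in>{th_lo..th_hi}. \<forall>th'\<in>{th_lo..th_hi}.
        \<bar>F th l - F th' l\<bar> \<le> K * \<bar>th - th'\<bar>"
    \<comment> \<open>(A3)\<close>
    and A3_dt: "\<exists>\<delta>. \<forall>th\<in>{th_lo..th_hi}. \<forall>t\<in>{0..1}.
        \<exists>D. (g th has_real_derivative D) (at t within {0..1}) \<and> D \<le> \<delta>"
    and A3_dth: "\<And>th t. th \<in> {th_lo..th_hi} \<Longrightarrow> t \<in> {0..1} \<Longrightarrow>
        \<exists>D. ((\<lambda>x. g x t) has_real_derivative D) (at th within {th_lo..th_hi}) \<and>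
            (t \<in> {0<..<1} \<longrightarrow> D \<le> 0)"
    and A3_lip: "\<exists>K. \<forall>t\<in>{0..1}. \<forall>th\<in>{th_lo..th_hi}. \<forall>th'\<in>{th_lo..th_hi}.
        \<bar>g th t - g th' t\<bar> \<le> K * \<bar>th - th'\<bar>"
    \<comment> \<open>the menu\<close>
    and menu: "\<And>th. th \<in> {th_lo..th_hi} \<Longrightarrow> Rm th \<in> retention Lbar"
    and U_int: "integrable mu (\<lambda>th. Uag Lbar g F th (Rm th) (pm th))"
    and V_int: "integrable mu (\<lambda>th. Vins Lbar gIn F th (Rm th) (pm th))"
    and IC: "incentive_compatible Lbar g F {th_lo..th_hi} Rm pm"
    and P2: "(\<integral>th. Vins Lbar gIn F th (Rm th) (pm th) \<partial>mu) \<ge> 0"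
  shows "individually_rational Lbar g gIn F {th_lo..th_hi} mu Rm pm \<longleftrightarrow>
         Uag Lbar g F th_lo (Rm th_lo) (pm th_lo) \<ge> Unoins Lbar g F th_lo"
proof -
  let ?I = "{th_lo..th_hi}"
  have lo: "th_lo \<in> ?I" using Th by simp
  have F_range: "F th l \<in> {0..1}" for th l unfolding F_def using P by (rule distF_range)
  have gF_le: "g th (F th l) \<le> g th_lo (F th_lo l)" if th: "th \<in> ?I" for th l
  proof (rule distorted_cdf_antimono[OF F_range A2_diff g_dist _ lo th])
    show "\<exists>D. ((\<lambda>x. g x t) has_real_derivative D) (at x within ?I) \<and> D \<le> 0"
      if "x \<in> ?I" "t \<in> {0<..<1}" for x t
      using A3_dth[of x t] that by auto
    show "th_lo \<le> th" using th by simp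
  qed
  have gF_cont: "continuous_on {0..Lbar} (\<lambda>l. g th (F th l))" if th: "th \<in> ?I" for th
  proof (rule continuous_on_compose_real_derivative[where g = "g th" and f = "F th"])
    show "\<exists>D. (g th has_real_derivative D) (at t within {0..1})" if "t \<in> {0..1}" for t
      using A3_dt th that by blast
    show "continuous_on {0..Lbar} (F th)" using F_cont[OF th] by (rule continuous_on_subset) simp
  qed (use F_range in blast)
  have "Uag Lbar g F th (Rm th) (pm th) \<ge> Unoins Lbar g F th"
    if th: "th \<in> ?I" and "Uag Lbar g F th_lo (Rm th_lo) (pm th_lo) \<ge> Unoins Lbar g F th_lo" for th
    using participation_of_lowest_type_suffices[OF IC lo that(2)
        insurance_gain_mono[where g = g and F = F, OF menu[OF lo] gF_cont[OF lo] gF_cont[OF th]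
          gF_le[OF th]] th] .
  then show ?thesis unfolding individually_rational_def using lo P2 by blast
qed

end
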